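(* The matrix $$f(z,w)=\begin{pmatrix} 1+zw & z^2 \\ -w^2 & 1-zw \end{pmatrix} \in \mathrm{SL}_2(\mathbb{C}[z,w])$$ (which is known not to be factorizable as a product of elementary matrices with polynomial entries) can be factorized as a product of $4$ elementary (unipotent upper/lower triangular) matrices with continuous entries on $\mathbb{C}^2$, and as a product of $5$ elementary matrices with holomorphic entries on $\mathbb{C}^2$. Both numbers are minimal in the respective ring (continuous functions, resp. holomorphic functions on $\mathbb{C}^2$). Moreover, any factorization $$f=\begin{pmatrix} 1 & h_1 \\ 0 & 1 \end{pmatrix}\begin{pmatrix} 1 & 0 \\ h_2 & 1 \end{pmatrix}\begin{pmatrix} 1 & h_3 \\ 0 & 1 \end{pmatrix}\begin{pmatrix} 1 & 0 \\ h_4 & 1 \end{pmatrix}$$ by $4$ continuous elementary matrices has to meet the singularity set of the corresponding fibration over $\mathbb{C}^2$, i.e. there is a point of $\mathbb{C}^2$ where $h_2=h_3=0$.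
   Context: For $N\ge 4$ the map $\Phi_N\colon\mathbb{C}^N\to\mathrm{SL}_2(\mathbb{C})$ sending $(z_1,\dots,z_N)$ to the product of $N$ alternating elementary matrices with off-diagonal entries $z_1,\dots,z_N$ is a surjective holomorphic map which is submersive exactly outside the set $S_N=\{(z_1,0,\dots,0,z_N)\}$ (all middle variables zero). A factorization of $f\colon\mathbb{C}^2\to\mathrm{SL}_2(\mathbb{C})$ into $N$ elementary factors corresponds to a section of the pull-back fibration $f^*\Phi_N=\{(x,z)\in\mathbb{C}^2\times\mathbb{C}^N : f(x)=\Phi_N(z)\}\to\mathbb{C}^2$; the singularity set is the part lying over $S_N$. *)

theory Defs
  imports "HOL-Analysis.Analysis"
begin

text \<open>2x2 complex matrices are rendered as complex^2^2 (rows first).\<close>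

definition upper_el :: "complex \<Rightarrow> complex^2^2" where
  "upper_el t = vector [vector [1, t], vector [0, 1]]"

definition lower_el :: "complex \<Rightarrow> complex^2^2" where
  "lower_el t = vector [vector [1, 0], vector [t, 1]]"

fun elprod :: "bool \<Rightarrow> complex list \<Rightarrow> complex^2^2" where
  "elprod b [] = mat 1"
| "elprod b (t # ts) = (if b then upper_el t else lower_el t) ** elprod (\<not> b) ts"

definition fmat :: "complex \<times> complex \<Rightarrow> complex^2^2" where
  "fmat p = (case p of (z, w) \<Rightarrow>
     vector [vector [1 + z*w, z^2], vector [- (w^2), 1 - z*w]])"

text \<open>Holomorphic functions on C^2: continuous and holomorphic in each variable
  separately (Osgood).\<close>
definition holomorphic_C2 :: "(complex \<times> complex \<Rightarrow> complex) \<Rightarrow> bool" where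
  "holomorphic_C2 h \<longleftrightarrow> continuous_on UNIV h
     \<and> (\<forall>w. (\<lambda>z. h (z, w)) holomorphic_on UNIV)
     \<and> (\<forall>z. (\<lambda>w. h (z, w)) holomorphic_on UNIV)"

text \<open>Products of elementary matrices of arbitrary
  types reduce to alternating ones (adjacent factors of equal type merge), so
  it suffices to consider alternating products, starting with either type.\<close>
definition factorizable ::
  "((complex \<times> complex \<Rightarrow> complex) \<Rightarrow> bool) \<Rightarrow> nat \<Rightarrow> (complex \<times> complex \<Rightarrow> complex^2^2) \<Rightarrow> bool" where
  "factorizable P N F \<longleftrightarrow> (\<exists>b hs. length hs = N \<and> (\<forall>h\<in>set hs. P h)
      \<and> (\<forall>x. F x = elprod b (map (\<lambda>h. h x) hs)))"

end

theory Submission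
  imports Defs "HOL-Complex_Analysis.Complex_Analysis"
begin

text \<open>
  The middle entries \<open>b\<close>, \<open>c\<close> of any factorization \<open>f = U(a) L(b) U(c) L(d)\<close> satisfy
  \<open>bc = -zw\<close>, and on the quadric \<open>zw = 1\<close> they are forced: \<open>b = -w\<^sup>2\<close>, \<open>c = z\<^sup>2\<close>.
  Along the disc \<open>u \<mapsto> (u, cnj u)\<close>, whose boundary circle lies on the quadric, \<open>b\<close> and \<open>c\<close>
  restrict to continuous functions with boundary values \<open>-cnj u\<^sup>2\<close> and \<open>u\<^sup>2\<close>. These have nonzero
  degree, so each restriction vanishes in the disc, and \<open>bc = -\<bar>u\<bar>\<^sup>2\<close> puts the zero at the origin.

  For holomorphic \<open>b\<close>, \<open>c\<close> the simple zero of \<open>bc\<close> along each coordinate axis rules out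
  common zeros off the origin, so on each punctured axis one of them vanishes identically and the
  other nowhere. In each resulting case \<open>b\<close>, \<open>c\<close>, or a continuous version of \<open>c/w\<close> or \<open>b/w\<close>
  is nonvanishing off the origin, with boundary values of nonzero degree on a disc pushed off
  the origin: a contradiction.

  With three continuous factors one entry would be a continuous reciprocal of a coordinate along
  the line \<open>z = 1\<close> or \<open>w = 1\<close>. The factorizations into four continuous and five holomorphic
  factors are explicit.
\<close>


section \<open>Products of elementary matrices\<close>

definition mat2 :: "complex \<Rightarrow> complex \<Rightarrow> complex \<Rightarrow> complex \<Rightarrow> complex^2^2" where
  "mat2 a b c d = vector [vector [a, b], vector [c, d]]"

lemma mat2_eq_iff: "mat2 a b c d = mat2 a' b' c' d' \<longleftrightarrow> a = a' \<and> b = b' \<and> c = c' \<and> d = d'"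
  unfolding mat2_def by (auto simp: vec_eq_iff forall_2)

lemma mat2_mult:
  "mat2 a b c d ** mat2 a' b' c' d' = mat2 (a*a' + b*c') (a*b' + b*d') (c*a' + d*c') (c*b' + d*d')"
  unfolding mat2_def by (auto simp: vec_eq_iff forall_2 matrix_matrix_mult_def sum_2)

lemma mat_1_eq_mat2: "mat 1 = mat2 1 0 0 1"
  unfolding mat2_def by (auto simp: vec_eq_iff forall_2 mat_def)

lemma upper_el_eq_mat2: "upper_el t = mat2 1 t 0 1"
  unfolding upper_el_def mat2_def ..

lemma lower_el_eq_mat2: "lower_el t = mat2 1 0 t 1"
  unfolding lower_el_def mat2_def ..

lemma fmat_eq_mat2: "fmat (z, w) = mat2 (1 + z*w) (z^2) (- (w^2)) (1 - z*w)"
  unfolding fmat_def mat2_def by simp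

lemmas mat2_simps = upper_el_eq_mat2 lower_el_eq_mat2 fmat_eq_mat2 mat_1_eq_mat2 mat2_mult mat2_eq_iff

lemma fmat_eq_upper_lower_upper_lower_iff:
  "fmat (z, w) = upper_el a ** lower_el b ** upper_el c ** lower_el d \<longleftrightarrow>
     1 + z*w = 1 + a*b + (a + c + a*b*c)*d \<and> z^2 = a + c + a*b*c \<and>
     - (w^2) = b + (1 + b*c)*d \<and> 1 - z*w = 1 + b*c"
  by (simp add: mat2_simps algebra_simps)

lemma fmat_eq_lower_upper_lower_upper_iff:
  "fmat (z, w) = lower_el a ** upper_el b ** lower_el c ** upper_el d \<longleftrightarrow>
     1 + z*w = 1 + b*c \<and> z^2 = b + (1 + b*c)*d \<and>
     - (w^2) = a + c + a*b*c \<and> 1 - z*w = 1 + a*b + (a + c + a*b*c)*d"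
  by (simp add: mat2_simps algebra_simps)

lemma fmat_eq_upper_lower_upper_lower:
  assumes "b*c = - (z*w)" "c + a*(1 - z*w) = z^2" "b + (1 - z*w)*d = - (w^2)" "a*b + z^2*d = z*w"
  shows "fmat (z, w) = upper_el a ** lower_el b ** upper_el c ** lower_el d"
  unfolding fmat_eq_upper_lower_upper_lower_iff using assms by (simp add: algebra_simps)


section \<open>Three continuous factors do not suffice\<close>

lemma continuous_mult_id_eq_const_imp_zero:
  fixes g :: "complex \<Rightarrow> complex"
  assumes "continuous_on UNIV g" and "\<And>v. v \<noteq> 0 \<Longrightarrow> v * g v = c"
  shows "c = 0"
proof -
  have "(\<lambda>v. v * g v) 0 = c"
  proof (rule continuous_constant_on_closure[where S = "UNIV - {0}" and f = "\<lambda>v. v * g v"])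
    show "continuous_on (closure (UNIV - {0})) (\<lambda>v. v * g v)"
      using assms(1) by (intro continuous_intros) (auto intro: continuous_on_subset)
    show "0 \<in> closure (UNIV - {0::complex})"
      using not_trivial_limit_within[of "0::complex" UNIV] by simp
  qed (use assms(2) in auto)
  then show ?thesis by simp
qed

lemma not_factorizable_continuous_3: "\<not> factorizable (continuous_on UNIV) 3 fmat"
proof
  assume "factorizable (continuous_on UNIV) 3 fmat"
  then obtain b hs where len: "length hs = 3" and cont: "\<forall>h\<in>set hs. continuous_on UNIV h"
    and eq: "\<forall>x. fmat x = elprod b (map (\<lambda>h. h x) hs)"
    unfolding factorizable_def by blast
  obtain h1 h2 h3 where hs: "hs = [h1, h2, h3]"
    using len by (auto simp: numeral_eq_Suc length_Suc_conv)
  show False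
  proof (cases b)
    case True
    have "w = h1 (1, w) * h2 (1, w)" "h2 (1, w) = - (w^2)" for w
      using eq[rule_format, of "(1, w)"] True unfolding hs by (simp_all add: mat2_simps)
    then have "w * (w * - h1 (1, w)) = w * 1" for w
      by (simp add: power2_eq_square algebra_simps)
    then have "w * - h1 (1, w) = 1" if "w \<noteq> 0" for w
      using that mult_left_cancel by blast
    moreover have "continuous_on UNIV (\<lambda>w. - h1 (1, w))"
      using cont unfolding hs by (auto intro!: continuous_intros continuous_on_compose2[of UNIV h1])
    ultimately show False
      using continuous_mult_id_eq_const_imp_zero by (metis one_neq_zero)
  next
    case False
    have "z = h2 (z, 1) * h3 (z, 1)" "h2 (z, 1) = z^2" for z
      using eq[rule_format, of "(z, 1)"] False unfolding hs by (simp_all add: mat2_simps)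
    then have "z * (z * h3 (z, 1)) = z * 1" for z
      by (simp add: power2_eq_square algebra_simps)
    then have "z * h3 (z, 1) = 1" if "z \<noteq> 0" for z
      using that mult_left_cancel by blast
    moreover have "continuous_on UNIV (\<lambda>z. h3 (z, 1))"
      using cont unfolding hs by (auto intro!: continuous_intros continuous_on_compose2[of UNIV h3])
    ultimately show False
      using continuous_mult_id_eq_const_imp_zero by (metis one_neq_zero)
  qed
qed


section \<open>The middle entries of a factorization into four factors\<close>

text \<open>The product relation is the \<open>(2,2)\<close> entry of \<open>fmat\<close>; on the quadric \<open>zw = 1\<close> the
  factor \<open>1 + bc\<close> vanishes, which decouples \<open>b\<close> and \<open>c\<close> from the outer factors.\<close>

definition middle_pair :: "(complex \<times> complex \<Rightarrow> complex) \<Rightarrow> (complex \<times> complex \<Rightarrow> complex) \<Rightarrow> bool" where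
  "middle_pair B C \<longleftrightarrow> (\<forall>z w. B (z, w) * C (z, w) = - (z*w))
     \<and> (\<forall>z w. z*w = 1 \<longrightarrow> B (z, w) = - (w^2) \<and> C (z, w) = z^2)"

lemma middle_entries_if_upper_first:
  assumes "fmat (z, w) = upper_el a ** lower_el b ** upper_el c ** lower_el d"
  shows "b*c = - (z*w)" and "z*w = 1 \<Longrightarrow> b = - (w^2) \<and> c = z^2"
proof -
  have e: "z^2 = c + a*(1 + b*c)" "- (w^2) = b + (1 + b*c)*d" "1 - z*w = 1 + b*c"
    using assms unfolding fmat_eq_upper_lower_upper_lower_iff by (auto simp: algebra_simps)
  then show bc: "b*c = - (z*w)" by simp
  assume "z*w = 1"
  then show "b = - (w^2) \<and> c = z^2" using e bc by simp
qed

lemma middle_entries_if_lower_first: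
  assumes "fmat (z, w) = lower_el a ** upper_el b ** lower_el c ** upper_el d"
  shows "b*c = z*w" and "z*w = -1 \<Longrightarrow> b = z^2 \<and> c = - (w^2)"
proof -
  have e: "1 + z*w = 1 + b*c" "z^2 = b + (1 + b*c)*d" "- (w^2) = c + a*(1 + b*c)"
    using assms unfolding fmat_eq_lower_upper_lower_upper_iff by (auto simp: algebra_simps)
  then show bc: "b*c = z*w" by simp
  assume "z*w = -1"
  then show "b = z^2 \<and> c = - (w^2)" using e bc by simp
qed

lemma middle_pair_if_upper_first:
  assumes "\<forall>x. fmat x = upper_el (h1 x) ** lower_el (h2 x) ** upper_el (h3 x) ** lower_el (h4 x)"
  shows "middle_pair h2 h3"
  using middle_entries_if_upper_first assms unfolding middle_pair_def by blast

lemma middle_pair_if_lower_first: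
  assumes "\<forall>x. fmat x = lower_el (h1 x) ** upper_el (h2 x) ** lower_el (h3 x) ** upper_el (h4 x)"
  shows "middle_pair (\<lambda>p. h3 (fst p, - snd p)) (\<lambda>p. h2 (fst p, - snd p))"
proof -
  have "h2 (z, -w) * h3 (z, -w) = z * (-w)"
    and "z * (-w) = -1 \<Longrightarrow> h2 (z, -w) = z^2 \<and> h3 (z, -w) = - ((-w)^2)" for z w
    using middle_entries_if_lower_first[OF assms[rule_format, of "(z, -w)"]] by auto
  then show ?thesis unfolding middle_pair_def by (simp add: mult.commute)
qed


section \<open>Circle maps of nonzero degree\<close>

text \<open>By the disc-extension characterization, this says that \<open>\<phi>\<close> restricted to the
  unit circle is not null-homotopic in \<open>\<complex> - {0}\<close>.\<close>

definition circle_map_essential :: "(complex \<Rightarrow> complex) \<Rightarrow> bool" where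
  "circle_map_essential \<phi> \<longleftrightarrow> (\<forall>f. continuous_on (cball 0 1) f \<and> (\<forall>u\<in>sphere 0 1. f u = \<phi> u)
     \<longrightarrow> (\<exists>u\<in>cball 0 1. f u = 0))"

lemma no_continuous_logarithm_id_circle:
  assumes "continuous_on (sphere 0 1) g" and "\<forall>u\<in>sphere (0::complex) 1. u = exp (g u)"
  shows False
proof -
  have "\<forall>u\<in>sphere (0::complex) 1. id u = exp (\<i> * of_real ((Im \<circ> g) u))"
  proof
    fix u :: complex
    assume u: "u \<in> sphere 0 1"
    then have "Re (g u) = 0"
      using assms(2) by (metis mem_sphere_0 norm_exp_eq_Re exp_eq_one_iff)
    then have "g u = \<i> * of_real (Im (g u))"
      by (simp add: complex_eq_iff)
    then show "id u = exp (\<i> * of_real ((Im \<circ> g) u))"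
      using assms(2) u by (metis comp_apply id_apply)
  qed
  moreover have "continuous_on (sphere 0 1) (Im \<circ> g)"
    using assms(1) by (intro continuous_intros continuous_on_compose)
  ultimately obtain a where "homotopic_with_canon (\<lambda>h. True) (sphere 0 1) (sphere (0::complex) 1) id (\<lambda>t. a)"
    using inessential_eq_continuous_logarithm_circle by blast
  then have "contractible (sphere (0::complex) 1)"
    unfolding contractible_def by blast
  then show False
    using contractible_sphere[of "0::complex" 1] by simp
qed

text \<open>An \<open>n\<close>-th root of \<open>exp (g u) / k\<close> divided by \<open>u\<close> takes finitely many values,
  hence is a constant \<open>c\<close>, and \<open>g / n - Ln c\<close> is then a logarithm of the identity.\<close>

lemma no_continuous_logarithm_power_circle:
  assumes "n \<ge> 1" and "k \<noteq> 0" and "continuous_on (sphere 0 1) g"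
    and "\<forall>u\<in>sphere (0::complex) 1. k * u ^ n = exp (g u)"
  shows False
proof -
  define h where "h u = exp (g u / of_nat n) / u" for u
  have cont_h: "continuous_on (sphere 0 1) h"
    unfolding h_def using assms(1,3) by (intro continuous_intros) auto
  have h_power: "h u ^ n = k" if "u \<in> sphere 0 1" for u
  proof -
    have "h u ^ n = exp (g u / of_nat n) ^ n / u ^ n"
      by (simp add: h_def power_divide)
    also have "exp (g u / of_nat n) ^ n = exp (g u)"
      using assms(1) by (simp flip: exp_of_nat_mult)
    also have "exp (g u) / u ^ n = k"
    proof -
      have "u \<noteq> 0" "k * u ^ n = exp (g u)"
        using assms(4) that by auto
      then show ?thesis
        by (simp add: field_simps)
    qed
    finally show ?thesis .
  qed
  have "finite (h ` sphere 0 1)"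
    by (rule finite_subset[OF _ finite_nth_roots[of n k]]) (use assms(1) h_power in auto)
  then have "h constant_on sphere 0 1"
    by (intro continuous_finite_range_constant cont_h connected_sphere) auto
  then obtain c where c: "\<And>u. u \<in> sphere 0 1 \<Longrightarrow> h u = c"
    unfolding constant_on_def by blast
  have "c ^ n = k"
    using c[of 1] h_power[of 1] by simp
  then have "c \<noteq> 0"
    using assms(1,2) by auto
  show False
  proof (rule no_continuous_logarithm_id_circle)
    show "continuous_on (sphere 0 1) (\<lambda>u. g u / of_nat n - Ln c)"
      using assms(3) by (intro continuous_intros) (use assms(1) in auto)
    show "\<forall>u\<in>sphere 0 1. u = exp (g u / of_nat n - Ln c)"
    proof
      fix u :: complex
      assume u: "u \<in> sphere 0 1"
      then have "u \<noteq> 0"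
        by auto
      have "exp (g u / of_nat n - Ln c) = exp (g u / of_nat n) / c"
        using \<open>c \<noteq> 0\<close> by (simp add: exp_diff)
      also have "\<dots> = u"
        using c[OF u] \<open>u \<noteq> 0\<close> \<open>c \<noteq> 0\<close> unfolding h_def by (auto simp: field_simps)
      finally show "u = exp (g u / of_nat n - Ln c)"
        by simp
    qed
  qed
qed

lemma circle_map_essential_power:
  assumes "n \<ge> 1" and "k \<noteq> 0"
  shows "circle_map_essential (\<lambda>u. k * u ^ n)"
  unfolding circle_map_essential_def
proof (intro allI impI, elim conjE, rule ccontr)
  fix f
  assume cont: "continuous_on (cball 0 1) f" and boundary: "\<forall>u\<in>sphere 0 1. f u = k * u ^ n"
    and "\<not> (\<exists>u\<in>cball 0 1. f u = 0)"
  then obtain g where g: "continuous_on (cball 0 1) g" "\<And>u. u \<in> cball 0 1 \<Longrightarrow> f u = exp (g u)"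
    using continuous_logarithm_on_cball[OF cont] by blast
  show False
  proof (rule no_continuous_logarithm_power_circle[OF assms])
    show "continuous_on (sphere 0 1) g"
      using g(1) continuous_on_subset sphere_cball by blast
    show "\<forall>u\<in>sphere 0 1. k * u ^ n = exp (g u)"
      using g(2) boundary sphere_cball by (metis subsetD)
  qed
qed

lemma circle_map_essential_cnj_power:
  assumes "n \<ge> 1" and "k \<noteq> 0"
  shows "circle_map_essential (\<lambda>u. k * cnj u ^ n)"
  unfolding circle_map_essential_def
proof (intro allI impI, elim conjE)
  fix f
  assume cont: "continuous_on (cball 0 1) f" and boundary: "\<forall>u\<in>sphere 0 1. f u = k * cnj u ^ n"
  have "continuous_on (cball 0 1) (\<lambda>u. f (cnj u))"
    by (rule continuous_on_compose2[OF cont]) (auto intro: continuous_intros)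
  moreover have "\<forall>u\<in>sphere 0 1. f (cnj u) = k * u ^ n"
    using boundary by simp
  ultimately obtain u where "u \<in> cball 0 1" "f (cnj u) = 0"
    using circle_map_essential_power[OF assms] unfolding circle_map_essential_def by blast
  then show "\<exists>u\<in>cball 0 1. f u = 0"
    by (intro bexI[of _ "cnj u"]) auto
qed

lemma zero_on_conj_disc:
  assumes "continuous_on UNIV E" and "circle_map_essential \<phi>"
    and "\<forall>u\<in>sphere 0 1. E (u, cnj u) = \<phi> u"
  shows "\<exists>u\<in>cball 0 1. E (u, cnj u) = 0"
proof -
  have "continuous_on (cball 0 1) (\<lambda>u. E (u, cnj u))"
    by (rule continuous_on_compose2[OF assms(1)]) (auto intro!: continuous_intros)
  then show ?thesis
    using assms(2,3) unfolding circle_map_essential_def by blast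
qed

text \<open>This disc has the same boundary circle as \<open>u \<mapsto> (u, cnj u)\<close> but misses the origin.\<close>

definition pushed_disc :: "complex \<Rightarrow> complex \<times> complex" where
  "pushed_disc u = (u, cnj u + of_real (1 - norm u ^ 2))"

lemma zero_off_origin:
  assumes "continuous_on (- {(0, 0)}) E" and "circle_map_essential \<phi>"
    and "\<forall>u\<in>sphere 0 1. E (u, cnj u) = \<phi> u"
  shows "\<exists>x. x \<noteq> (0, 0) \<and> E x = 0"
proof -
  have "continuous_on (cball 0 1) (\<lambda>u. E (pushed_disc u))"
    by (rule continuous_on_compose2[OF assms(1)])
      (auto simp: pushed_disc_def intro!: continuous_intros)
  moreover have "\<forall>u\<in>sphere 0 1. E (pushed_disc u) = \<phi> u"
    using assms(3) by (simp add: pushed_disc_def)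
  ultimately obtain u where "E (pushed_disc u) = 0"
    using assms(2) unfolding circle_map_essential_def by blast
  moreover have "pushed_disc u \<noteq> (0, 0)"
    by (simp add: pushed_disc_def)
  ultimately show ?thesis
    by blast
qed


section \<open>Continuous four-term factorizations meet the singular set\<close>

lemma sphere_mult_cnj: "u \<in> sphere 0 1 \<Longrightarrow> u * cnj u = 1"
  using complex_norm_square[of u] by simp

lemma middle_pair_on_circle:
  assumes "middle_pair B C" and "u \<in> sphere 0 1"
  shows "B (u, cnj u) = - (cnj u ^ 2)" and "C (u, cnj u) = u ^ 2"
  using assms(1) sphere_mult_cnj[OF assms(2)] unfolding middle_pair_def by auto

lemma middle_pair_zero_on_conj_disc:
  assumes "middle_pair B C" and "B (u, cnj u) = 0 \<or> C (u, cnj u) = 0"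
  shows "u = 0"
proof -
  have "B (u, cnj u) * C (u, cnj u) = - (u * cnj u)"
    using assms(1) unfolding middle_pair_def by blast
  with assms(2) show "u = 0"
    by auto
qed

lemma continuous_middle_pair_zero_at_origin:
  assumes "middle_pair B C" and "continuous_on UNIV B" and "continuous_on UNIV C"
  shows "B (0, 0) = 0" and "C (0, 0) = 0"
proof -
  obtain u where "B (u, cnj u) = 0"
    using zero_on_conj_disc[OF assms(2) circle_map_essential_cnj_power[of 2 "-1"]]
      middle_pair_on_circle[OF assms(1)] by auto
  moreover from this have "u = 0"
    using middle_pair_zero_on_conj_disc[OF assms(1)] by blast
  ultimately show "B (0, 0) = 0"
    by simp
  obtain v where "C (v, cnj v) = 0"
    using zero_on_conj_disc[OF assms(3) circle_map_essential_power[of 2 1]]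
      middle_pair_on_circle[OF assms(1)] by auto
  moreover from this have "v = 0"
    using middle_pair_zero_on_conj_disc[OF assms(1)] by blast
  ultimately show "C (0, 0) = 0"
    by simp
qed


section \<open>Four holomorphic factors do not suffice\<close>

lemma simple_zero_product_factor_nonzero:
  fixes f g :: "complex \<Rightarrow> complex"
  assumes "f field_differentiable at 0" and "g field_differentiable at 0"
    and "\<And>v. f v * g v = k * v" and "k \<noteq> 0"
  shows "f 0 \<noteq> 0 \<or> g 0 \<noteq> 0"
proof (rule ccontr)
  assume "\<not> ?thesis"
  then have "f 0 = 0" "g 0 = 0"
    by auto
  obtain f' g' where "(f has_field_derivative f') (at 0)" "(g has_field_derivative g') (at 0)"
    using assms(1,2) unfolding field_differentiable_def by blast
  then have "((\<lambda>v. f v * g v) has_field_derivative f' * g 0 + g' * f 0) (at 0)"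
    by (rule DERIV_mult)
  then have "((\<lambda>v. k * v) has_field_derivative 0) (at 0)"
    using \<open>f 0 = 0\<close> \<open>g 0 = 0\<close> assms(3) by simp
  moreover have "((\<lambda>v. k * v) has_field_derivative k) (at 0)"
    by (auto intro!: derivative_eq_intros)
  ultimately show False
    using DERIV_unique assms(4) by blast
qed

lemma holomorphic_middle_pair_no_common_zero:
  assumes "middle_pair B C" and "holomorphic_C2 B" and "holomorphic_C2 C" and "x \<noteq> (0, 0)"
  shows "B x \<noteq> 0 \<or> C x \<noteq> 0"
proof -
  obtain z w where x: "x = (z, w)"
    by (cases x)
  have prod: "B (z, w) * C (z, w) = - (z*w)" for z w
    using assms(1) unfolding middle_pair_def by blast
  have diff: "(\<lambda>v. h (v, w)) field_differentiable at v" "(\<lambda>v. h (z, v)) field_differentiable at v"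
    if "holomorphic_C2 h" for h z w v
    using that unfolding holomorphic_C2_def by (auto intro: holomorphic_on_imp_differentiable_at)
  consider "z = 0" "w \<noteq> 0" | "w = 0" "z \<noteq> 0" | "z \<noteq> 0" "w \<noteq> 0"
    using assms(4) x by auto
  then show ?thesis
  proof cases
    case 1
    have "B (0, w) \<noteq> 0 \<or> C (0, w) \<noteq> 0"
    proof (rule simple_zero_product_factor_nonzero[where f = "\<lambda>v. B (v, w)" and g = "\<lambda>v. C (v, w)"])
      show "(\<lambda>v. B (v, w)) field_differentiable at 0" "(\<lambda>v. C (v, w)) field_differentiable at 0"
        using diff(1) assms(2,3) by blast+
      show "B (v, w) * C (v, w) = - w * v" for v
        using prod[of v w] by (simp add: mult.commute)
    qed (use 1 in simp)
    then show ?thesis using 1 x by simp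
  next
    case 2
    have "B (z, 0) \<noteq> 0 \<or> C (z, 0) \<noteq> 0"
    proof (rule simple_zero_product_factor_nonzero[where f = "\<lambda>v. B (z, v)" and g = "\<lambda>v. C (z, v)"])
      show "(\<lambda>v. B (z, v)) field_differentiable at 0" "(\<lambda>v. C (z, v)) field_differentiable at 0"
        using diff(2) assms(2,3) by blast+
      show "B (z, v) * C (z, v) = - z * v" for v
        using prod[of z v] by simp
    qed (use 2 in simp)
    then show ?thesis using 2 x by simp
  next
    case 3
    then show ?thesis using prod[of z w] x by auto
  qed
qed

lemma punctured_plane_nonzero_dichotomy:
  fixes X Y :: "complex \<Rightarrow> complex"
  assumes "continuous_on UNIV X" and "continuous_on UNIV Y"
    and "\<And>v. X v * Y v = 0" and "\<And>v. v \<noteq> 0 \<Longrightarrow> X v \<noteq> 0 \<or> Y v \<noteq> 0"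
  shows "(\<forall>v. v \<noteq> 0 \<longrightarrow> X v \<noteq> 0) \<or> (\<forall>v. v \<noteq> 0 \<longrightarrow> Y v \<noteq> 0)"
proof -
  let ?S = "- {0::complex}"
  have "closedin (top_of_set ?S) {v \<in> ?S. X v = 0}"
    by (rule continuous_closedin_preimage_constant) (rule continuous_on_subset[OF assms(1)], simp)
  moreover have "closedin (top_of_set ?S) {v \<in> ?S. Y v = 0}"
    by (rule continuous_closedin_preimage_constant) (rule continuous_on_subset[OF assms(2)], simp)
  moreover have "{v \<in> ?S. X v = 0} \<union> {v \<in> ?S. Y v = 0} = ?S"
    using assms(3) by auto
  moreover have "{v \<in> ?S. X v = 0} \<inter> {v \<in> ?S. Y v = 0} = {}"
    using assms(4) by auto
  moreover have "connected ?S"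
    by (intro path_connected_imp_connected path_connected_punctured_universe) simp
  ultimately have "{v \<in> ?S. X v = 0} = {} \<or> {v \<in> ?S. Y v = 0} = {}"
    unfolding connected_closedin_eq by blast
  then show ?thesis
    by auto
qed

lemma holomorphic_middle_pair_cases:
  assumes "middle_pair B C" and "holomorphic_C2 B" and "holomorphic_C2 C"
  shows "(\<forall>x. x \<noteq> (0, 0) \<longrightarrow> B x \<noteq> 0) \<or> (\<forall>x. x \<noteq> (0, 0) \<longrightarrow> C x \<noteq> 0)
    \<or> (\<forall>z w. (w \<noteq> 0 \<longrightarrow> C (z, w) \<noteq> 0) \<and> (z \<noteq> 0 \<longrightarrow> B (z, w) \<noteq> 0))
    \<or> (\<forall>z w. (w \<noteq> 0 \<longrightarrow> B (z, w) \<noteq> 0) \<and> (z \<noteq> 0 \<longrightarrow> C (z, w) \<noteq> 0))"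
proof -
  have prod: "B (z, w) * C (z, w) = - (z*w)" for z w
    using assms(1) unfolding middle_pair_def by blast
  have cont: "continuous_on UNIV (\<lambda>v. h (0, v))" "continuous_on UNIV (\<lambda>v. h (v, 0))"
    if "holomorphic_C2 h" for h
    using that unfolding holomorphic_C2_def
    by (auto intro!: continuous_intros intro: continuous_on_compose2[of UNIV h])
  note no_common_zero = holomorphic_middle_pair_no_common_zero[OF assms]
  have "(\<forall>w. w \<noteq> 0 \<longrightarrow> B (0, w) \<noteq> 0) \<or> (\<forall>w. w \<noteq> 0 \<longrightarrow> C (0, w) \<noteq> 0)"
    by (rule punctured_plane_nonzero_dichotomy[OF cont(1)[OF assms(2)] cont(1)[OF assms(3)]])
      (use prod no_common_zero in auto)
  moreover have "(\<forall>z. z \<noteq> 0 \<longrightarrow> B (z, 0) \<noteq> 0) \<or> (\<forall>z. z \<noteq> 0 \<longrightarrow> C (z, 0) \<noteq> 0)"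
    by (rule punctured_plane_nonzero_dichotomy[OF cont(2)[OF assms(2)] cont(2)[OF assms(3)]])
      (use prod no_common_zero in auto)
  moreover have "B (z, w) \<noteq> 0" "C (z, w) \<noteq> 0" if "z \<noteq> 0" "w \<noteq> 0" for z w
    using prod[of z w] that by auto
  moreover have "B (z, 0) \<noteq> 0" if "z \<noteq> 0" "C (z, 0) = 0" for z
    using no_common_zero[of "(z, 0)"] that by auto
  moreover have "C (z, 0) \<noteq> 0" if "z \<noteq> 0" "B (z, 0) = 0" for z
    using no_common_zero[of "(z, 0)"] that by auto
  moreover have "B (0, w) \<noteq> 0" if "w \<noteq> 0" "C (0, w) = 0" for w
    using no_common_zero[of "(0, w)"] that by auto
  moreover have "C (0, w) \<noteq> 0" if "w \<noteq> 0" "B (0, w) = 0" for w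
    using no_common_zero[of "(0, w)"] that by auto
  ultimately show ?thesis
    by (smt (verit) prod_eq_iff fst_conv snd_conv)
qed

text \<open>When \<open>X (z, w) * Y (z, w) = - z * w\<close> this is \<open>X (z, w) / w\<close> where \<open>w \<noteq> 0\<close> and
  \<open>- z / Y (z, w)\<close> where \<open>Y (z, w) \<noteq> 0\<close>, written so as to be continuous wherever one
  of the two is defined.\<close>

definition snd_quotient ::
  "(complex \<times> complex \<Rightarrow> complex) \<Rightarrow> (complex \<times> complex \<Rightarrow> complex) \<Rightarrow> complex \<times> complex \<Rightarrow> complex"
  where "snd_quotient X Y p =
    (X p * cnj (snd p) - fst p * cnj (Y p)) / of_real (norm (snd p) ^ 2 + norm (Y p) ^ 2)"

lemma snd_quotient_eq_div_snd:
  assumes "\<And>z w. X (z, w) * Y (z, w) = - (z*w)" and "w \<noteq> 0"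
  shows "snd_quotient X Y (z, w) = X (z, w) / w"
proof -
  have "X (z, w) / w * of_real (norm w ^ 2 + norm (Y (z, w)) ^ 2)
      = X (z, w) / w * (w * cnj w + Y (z, w) * cnj (Y (z, w)))"
    by (simp only: of_real_add complex_norm_square)
  also have "\<dots> = X (z, w) * cnj w + X (z, w) * Y (z, w) * cnj (Y (z, w)) / w"
    using assms(2) by (simp add: field_simps)
  also have "\<dots> = X (z, w) * cnj w - z * cnj (Y (z, w))"
    using assms(2) by (simp add: assms(1))
  finally show ?thesis
    using assms(2) unfolding snd_quotient_def
    by (simp add: field_simps add_pos_nonneg del: of_real_add)
qed

lemma snd_quotient_on_fst_axis:
  assumes "Y (z, 0) \<noteq> 0"
  shows "snd_quotient X Y (z, 0) = - z / Y (z, 0)"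
  using assms unfolding snd_quotient_def
  by (simp add: complex_norm_square[symmetric] field_simps power2_eq_square)

lemma snd_quotient_nonzero:
  assumes "\<And>z w. X (z, w) * Y (z, w) = - (z*w)"
    and "\<And>z w. w \<noteq> 0 \<Longrightarrow> X (z, w) \<noteq> 0" and "\<And>z w. z \<noteq> 0 \<Longrightarrow> Y (z, w) \<noteq> 0"
    and "x \<noteq> (0, 0)"
  shows "snd_quotient X Y x \<noteq> 0"
proof -
  obtain z w where x: "x = (z, w)"
    by (cases x)
  show ?thesis
  proof (cases "w = 0")
    case True
    then have "z \<noteq> 0"
      using assms(4) x by simp
    then show ?thesis
      using snd_quotient_on_fst_axis[of Y z X] assms(3)[of z 0] x True by simp
  next
    case False
    then show ?thesis
      using snd_quotient_eq_div_snd[OF assms(1) False] assms(2) x by simp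
  qed
qed

lemma continuous_on_snd_quotient:
  assumes "continuous_on UNIV X" and "continuous_on UNIV Y"
    and "\<And>z w. z \<noteq> 0 \<Longrightarrow> Y (z, w) \<noteq> 0"
  shows "continuous_on (- {(0, 0)}) (snd_quotient X Y)"
proof -
  have "norm (snd x) ^ 2 + norm (Y x) ^ 2 \<noteq> 0" if "x \<noteq> (0, 0)" for x
    using that assms(3)[of "fst x" "snd x"] by (cases x) auto
  then show ?thesis
    unfolding snd_quotient_def
    by (intro continuous_on_divide continuous_intros continuous_on_subset[OF assms(1)]
        continuous_on_subset[OF assms(2)]) (simp_all del: of_real_add of_real_power)
qed

lemma holomorphic_C2_reflect_snd:
  assumes "holomorphic_C2 h"
  shows "holomorphic_C2 (\<lambda>p. h (fst p, - snd p))"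
  unfolding holomorphic_C2_def
proof (intro conjI allI)
  show "continuous_on UNIV (\<lambda>p. h (fst p, - snd p))"
    using assms unfolding holomorphic_C2_def
    by (auto intro!: continuous_intros intro: continuous_on_compose2[of UNIV h])
  show "(\<lambda>z. h (fst (z, w), - snd (z, w))) holomorphic_on UNIV" for w
    using assms unfolding holomorphic_C2_def by simp
  show "(\<lambda>w. h (fst (z, w), - snd (z, w))) holomorphic_on UNIV" for z
  proof -
    have "((\<lambda>w. h (z, w)) \<circ> uminus) holomorphic_on UNIV"
      using assms unfolding holomorphic_C2_def
      by (intro holomorphic_on_compose holomorphic_intros) (auto intro: holomorphic_on_subset)
    then show ?thesis
      by (simp add: o_def)
  qed
qed

lemma not_holomorphic_middle_pair:
  assumes "middle_pair B C" and "holomorphic_C2 B" and "holomorphic_C2 C"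
  shows False
proof -
  have cont: "continuous_on UNIV B" "continuous_on UNIV C"
    using assms(2,3) unfolding holomorphic_C2_def by auto
  have prod: "B (z, w) * C (z, w) = - (z*w)" "C (z, w) * B (z, w) = - (z*w)" for z w
    using assms(1) unfolding middle_pair_def by (auto simp: mult.commute)
  note boundary = middle_pair_on_circle[OF assms(1)]
  note essential = circle_map_essential_power circle_map_essential_cnj_power
  consider "\<And>x. x \<noteq> (0, 0) \<Longrightarrow> B x \<noteq> 0" | "\<And>x. x \<noteq> (0, 0) \<Longrightarrow> C x \<noteq> 0"
    | "\<And>z w. w \<noteq> 0 \<Longrightarrow> C (z, w) \<noteq> 0" "\<And>z w. z \<noteq> 0 \<Longrightarrow> B (z, w) \<noteq> 0"
    | "\<And>z w. w \<noteq> 0 \<Longrightarrow> B (z, w) \<noteq> 0" "\<And>z w. z \<noteq> 0 \<Longrightarrow> C (z, w) \<noteq> 0"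
    using holomorphic_middle_pair_cases[OF assms] by blast
  then show False
  proof cases
    case 1
    have "\<forall>u\<in>sphere 0 1. B (u, cnj u) = - 1 * cnj u ^ 2"
      using boundary by simp
    then show False
      using zero_off_origin[OF continuous_on_subset[OF cont(1)] essential(2)[of 2 "- 1"]] 1 by auto
  next
    case 2
    have "\<forall>u\<in>sphere 0 1. C (u, cnj u) = 1 * u ^ 2"
      using boundary by simp
    then show False
      using zero_off_origin[OF continuous_on_subset[OF cont(2)] essential(1)[of 2 1]] 2 by auto
  next
    case 3
    have "snd_quotient C B (u, cnj u) = 1 * u ^ 3" if "u \<in> sphere 0 1" for u
    proof -
      have "cnj u \<noteq> 0"
        using that by auto
      then have "snd_quotient C B (u, cnj u) = u ^ 2 / cnj u"
        using snd_quotient_eq_div_snd[OF prod(2)] boundary(2)[OF that] by simp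
      also have "\<dots> = u ^ 3"
        using sphere_mult_cnj[OF that] \<open>cnj u \<noteq> 0\<close> by (simp add: field_simps power2_eq_square power3_eq_cube)
      finally show ?thesis
        by simp
    qed
    then show False
      using zero_off_origin[OF continuous_on_snd_quotient[OF cont(2,1)] essential(1)[of 3 1]]
        snd_quotient_nonzero[OF prod(2)] 3 by auto
  next
    case 4
    have "snd_quotient B C (u, cnj u) = - 1 * cnj u ^ 1" if "u \<in> sphere 0 1" for u
    proof -
      have "cnj u \<noteq> 0"
        using that by auto
      then show ?thesis
        using snd_quotient_eq_div_snd[OF prod(1)] boundary(1)[OF that]
        by (simp add: power2_eq_square)
    qed
    then show False
      using zero_off_origin[OF continuous_on_snd_quotient[OF cont] essential(2)[of 1 "- 1"]]
        snd_quotient_nonzero[OF prod(1)] 4 by auto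
  qed
qed

lemma not_factorizable_holomorphic_4: "\<not> factorizable holomorphic_C2 4 fmat"
proof
  assume "factorizable holomorphic_C2 4 fmat"
  then obtain b hs where len: "length hs = 4" and hol: "\<forall>h\<in>set hs. holomorphic_C2 h"
    and eq: "\<forall>x. fmat x = elprod b (map (\<lambda>h. h x) hs)"
    unfolding factorizable_def by blast
  obtain h1 h2 h3 h4 where hs: "hs = [h1, h2, h3, h4]"
    using len by (auto simp: numeral_eq_Suc length_Suc_conv)
  have "holomorphic_C2 h2" "holomorphic_C2 h3"
    using hol hs by auto
  show False
  proof (cases b)
    case True
    then have "middle_pair h2 h3"
      using eq hs by (intro middle_pair_if_upper_first[of h1 _ _ h4]) (simp add: matrix_mul_assoc)
    then show False
      using not_holomorphic_middle_pair \<open>holomorphic_C2 h2\<close> \<open>holomorphic_C2 h3\<close> by blast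
  next
    case False
    then have "middle_pair (\<lambda>p. h3 (fst p, - snd p)) (\<lambda>p. h2 (fst p, - snd p))"
      using eq hs by (intro middle_pair_if_lower_first[of h1 _ _ h4]) (simp add: matrix_mul_assoc)
    then show False
      using not_holomorphic_middle_pair holomorphic_C2_reflect_snd
        \<open>holomorphic_C2 h2\<close> \<open>holomorphic_C2 h3\<close> by blast
  qed
qed


section \<open>A factorization into four continuous factors\<close>

lemma continuous_on_UNIV_if_dominated:
  fixes f :: "'a::t2_space \<Rightarrow> 'b::real_normed_vector"
  assumes "\<And>x. x \<notin> Z \<Longrightarrow> isCont f x" and "\<And>x. x \<in> Z \<Longrightarrow> f x = 0"
    and "continuous_on UNIV g" and "\<And>x. x \<in> Z \<Longrightarrow> g x = 0" and "\<And>x. norm (f x) \<le> g x"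
  shows "continuous_on UNIV f"
  unfolding continuous_on_eq_continuous_at[OF open_UNIV]
proof
  fix x
  show "isCont f x"
  proof (cases "x \<in> Z")
    case True
    have "(g \<longlongrightarrow> 0) (at x)"
      using assms(3,4) True by (metis UNIV_I continuous_on_def)
    then have "(f \<longlongrightarrow> 0) (at x)"
      using Lim_null_comparison[OF always_eventually] assms(5) by blast
    then show ?thesis
      using assms(2) True by (simp add: isCont_def)
  qed (rule assms(1))
qed

text \<open>\<open>\<bar>z\<bar>\<^bsup>3/2\<^esup>\<close>: the exponent only has to lie strictly between 1 and 2, so that both
  \<open>z\<^sup>2 / rho\<close> and \<open>rho / z\<close> tend to 0 with \<open>z\<close>.\<close>

definition rho :: "complex \<times> complex \<Rightarrow> complex" where
  "rho p = of_real (sqrt (norm (fst p)) ^ 3)"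

definition denom :: "complex \<times> complex \<Rightarrow> complex" where
  "denom p = of_real (sqrt (norm (fst p)) ^ 3 + norm (1 - fst p * snd p) ^ 2)"

lemma denom_eq: "denom p = rho p + (1 - fst p * snd p) * cnj (1 - fst p * snd p)"
  unfolding denom_def rho_def of_real_add complex_norm_square ..

lemma denom_nonzero: "denom p \<noteq> 0"
proof -
  have "sqrt (norm (fst p)) ^ 3 + norm (1 - fst p * snd p) ^ 2 > 0"
    by (cases "fst p = 0") (auto intro: add_pos_nonneg)
  then show ?thesis
    unfolding denom_def by (metis of_real_eq_0_iff less_irrefl)
qed

text \<open>Both quotients are \<open>0\<close> at \<open>z = 0\<close> because \<open>x / 0 = 0\<close>, which is their continuous extension.\<close>

definition sq_div_rho :: "complex \<times> complex \<Rightarrow> complex" where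
  "sq_div_rho p = fst p ^ 2 / rho p"

definition rho_div_fst :: "complex \<times> complex \<Rightarrow> complex" where
  "rho_div_fst p = rho p / fst p"

lemma norm_sq_div_rho: "norm (sq_div_rho p) = sqrt (norm (fst p))"
  and norm_rho_div_fst: "norm (rho_div_fst p) = sqrt (norm (fst p))"
proof -
  define s where "s = sqrt (norm (fst p))"
  have s: "norm (fst p) = s ^ 2" "s \<ge> 0"
    by (simp_all add: s_def)
  have "norm (sq_div_rho p) = norm (fst p) ^ 2 / s ^ 3" "norm (rho_div_fst p) = s ^ 3 / norm (fst p)"
    by (simp_all add: sq_div_rho_def rho_div_fst_def rho_def norm_divide norm_power s_def)
  then show "norm (sq_div_rho p) = s" "norm (rho_div_fst p) = s"
    unfolding s(1) by (simp_all add: eval_nat_numeral)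
qed

lemma continuous_on_sq_div_rho: "continuous_on UNIV sq_div_rho"
  and continuous_on_rho_div_fst: "continuous_on UNIV rho_div_fst"
proof -
  have "isCont rho p" for p
    unfolding rho_def by (intro continuous_intros)
  moreover have "rho p \<noteq> 0" if "fst p \<noteq> 0" for p
    using that by (simp add: rho_def)
  ultimately have iso: "isCont sq_div_rho p" "isCont rho_div_fst p" if "fst p \<noteq> 0" for p
    unfolding sq_div_rho_def[abs_def] rho_div_fst_def[abs_def] using that
    by (auto intro!: continuous_intros)
  have bound: "continuous_on UNIV (\<lambda>p. sqrt (norm (fst p)))"
    by (intro continuous_intros)
  show "continuous_on UNIV sq_div_rho"
    by (rule continuous_on_UNIV_if_dominated[where Z = "{p. fst p = 0}", OF iso(1) _ bound])
      (simp_all add: norm_sq_div_rho, simp add: sq_div_rho_def)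
  show "continuous_on UNIV rho_div_fst"
    by (rule continuous_on_UNIV_if_dominated[where Z = "{p. fst p = 0}", OF iso(2) _ bound])
      (simp_all add: norm_rho_div_fst, simp add: rho_div_fst_def)
qed

definition cfac_a :: "complex \<times> complex \<Rightarrow> complex" where
  "cfac_a p = - (sq_div_rho p * cnj (1 - fst p * snd p))"

definition cfac_b :: "complex \<times> complex \<Rightarrow> complex" where
  "cfac_b p = - (snd p * rho_div_fst p / denom p)"

definition cfac_c :: "complex \<times> complex \<Rightarrow> complex" where
  "cfac_c p = sq_div_rho p * denom p"

definition cfac_d :: "complex \<times> complex \<Rightarrow> complex" where
  "cfac_d p = - cfac_b p - snd p ^ 2 * cnj (1 - fst p * snd p) / denom p"

lemma continuous_on_cfac:
  "continuous_on UNIV cfac_a" "continuous_on UNIV cfac_b"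
  "continuous_on UNIV cfac_c" "continuous_on UNIV cfac_d"
proof -
  have denom: "continuous_on UNIV denom"
    unfolding denom_def by (intro continuous_intros)
  note intros = continuous_intros continuous_on_sq_div_rho continuous_on_rho_div_fst denom denom_nonzero
  show b: "continuous_on UNIV cfac_b"
    unfolding cfac_b_def[abs_def] by (intro intros) (simp add: denom_nonzero)
  show "continuous_on UNIV cfac_a" "continuous_on UNIV cfac_c"
    unfolding cfac_a_def[abs_def] cfac_c_def[abs_def] by (intro intros)+
  show "continuous_on UNIV cfac_d"
    unfolding cfac_d_def[abs_def] by (intro intros b) (simp add: denom_nonzero)
qed

lemma four_factor_identities:
  fixes z w \<rho> \<sigma> D :: complex
  assumes "z \<noteq> 0" and "\<rho> \<noteq> 0" and "D \<noteq> 0" and D: "D = \<rho> + (1 - z*w) * \<sigma>"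
  defines "b \<equiv> - (w * (\<rho> / z) / D)"
  shows "b * (z^2 / \<rho> * D) = - (z*w)"
    and "z^2 / \<rho> * D + - (z^2 / \<rho> * \<sigma>) * (1 - z*w) = z^2"
    and "b + (1 - z*w) * (- b - w^2 * \<sigma> / D) = - (w^2)"
    and "- (z^2 / \<rho> * \<sigma>) * b + z^2 * (- b - w^2 * \<sigma> / D) = z*w"
  using assms(1-3) unfolding b_def
  by (simp_all add: field_simps power2_eq_square, unfold D, algebra+)

lemma fmat_eq_cfac_product:
  "fmat p = upper_el (cfac_a p) ** lower_el (cfac_b p) ** upper_el (cfac_c p) ** lower_el (cfac_d p)"
proof -
  obtain z w where p: "p = (z, w)"
    by (cases p)
  show ?thesis
  proof (cases "z = 0")
    case True
    then show ?thesis
      unfolding p by (intro fmat_eq_upper_lower_upper_lower)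
        (simp_all add: cfac_a_def cfac_b_def cfac_c_def cfac_d_def sq_div_rho_def rho_div_fst_def denom_def)
  next
    case False
    then have "rho (z, w) \<noteq> 0"
      by (simp add: rho_def)
    note identities = four_factor_identities[OF False this denom_nonzero denom_eq[of p, unfolded p fst_conv snd_conv]]
    show ?thesis
      unfolding p by (intro fmat_eq_upper_lower_upper_lower)
        (use identities in \<open>simp_all add: cfac_a_def cfac_b_def cfac_c_def cfac_d_def sq_div_rho_def rho_div_fst_def\<close>)
  qed
qed

lemma factorizable_continuous_4: "factorizable (continuous_on UNIV) 4 fmat"
  unfolding factorizable_def
proof (intro exI[of _ True] exI[of _ "[cfac_a, cfac_b, cfac_c, cfac_d]"] conjI allI)
  show "\<forall>h\<in>set [cfac_a, cfac_b, cfac_c, cfac_d]. continuous_on UNIV h"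
    using continuous_on_cfac by simp
  show "fmat x = elprod True (map (\<lambda>h. h x) [cfac_a, cfac_b, cfac_c, cfac_d])" for x
    using fmat_eq_cfac_product[of x] by (simp add: matrix_mul_assoc)
qed simp


section \<open>A factorization into five holomorphic factors\<close>

text \<open>\<open>(e\<^sup>t - 1) / t\<close> and \<open>(e\<^sup>t - 1 - t) / t\<^sup>2\<close>, continued holomorphically to \<open>t = 0\<close>,
  written in the form of \<open>pole_lemma\<close>.\<close>

definition exp_quot1 :: "complex \<Rightarrow> complex" where
  "exp_quot1 t = (if t = 0 then deriv exp 0 else (exp t - exp 0) / (t - 0))"

definition exp_quot2 :: "complex \<Rightarrow> complex" where
  "exp_quot2 t = (if t = 0 then deriv exp_quot1 0 else (exp_quot1 t - exp_quot1 0) / (t - 0))"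

lemma holomorphic_exp_quot1: "exp_quot1 holomorphic_on UNIV"
  unfolding exp_quot1_def[abs_def] by (rule pole_lemma) (auto intro: holomorphic_intros)

lemma holomorphic_exp_quot2: "exp_quot2 holomorphic_on UNIV"
  unfolding exp_quot2_def[abs_def] by (rule pole_lemma[OF holomorphic_exp_quot1]) auto

lemma exp_quot1_0: "exp_quot1 0 = 1"
  unfolding exp_quot1_def using DERIV_imp_deriv[OF DERIV_exp[of 0]] by simp

lemma mult_exp_quot1: "t * exp_quot1 t = exp t - 1"
  by (cases "t = 0") (auto simp: exp_quot1_def)

lemma mult_exp_quot2: "t * exp_quot2 t = exp_quot1 t - 1"
  by (cases "t = 0") (auto simp: exp_quot2_def exp_quot1_0)

lemma holomorphic_C2_comp_mult:
  assumes "\<phi> holomorphic_on UNIV"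
  shows "holomorphic_C2 (\<lambda>p. \<phi> (fst p * snd p))"
  unfolding holomorphic_C2_def
proof (intro conjI allI)
  show "continuous_on UNIV (\<lambda>p. \<phi> (fst p * snd p))"
    using holomorphic_on_imp_continuous_on[OF assms]
    by (auto intro!: continuous_intros intro: continuous_on_compose2[of UNIV \<phi>])
  have "(\<phi> \<circ> (\<lambda>v. c * v)) holomorphic_on UNIV" for c
    by (rule holomorphic_on_compose) (auto intro: holomorphic_intros holomorphic_on_subset[OF assms])
  then show "(\<lambda>z. \<phi> (fst (z, w) * snd (z, w))) holomorphic_on UNIV"
    "(\<lambda>w. \<phi> (fst (z, w) * snd (z, w))) holomorphic_on UNIV" for z w
    by (simp_all add: o_def mult.commute[of _ w])
qed

lemma holomorphic_C2_intros:
  "holomorphic_C2 fst" "holomorphic_C2 snd" "holomorphic_C2 (\<lambda>p. c)"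
  "holomorphic_C2 f \<Longrightarrow> holomorphic_C2 g \<Longrightarrow> holomorphic_C2 (\<lambda>p. f p + g p)"
  "holomorphic_C2 f \<Longrightarrow> holomorphic_C2 g \<Longrightarrow> holomorphic_C2 (\<lambda>p. f p - g p)"
  "holomorphic_C2 f \<Longrightarrow> holomorphic_C2 g \<Longrightarrow> holomorphic_C2 (\<lambda>p. f p * g p)"
  "holomorphic_C2 f \<Longrightarrow> holomorphic_C2 (\<lambda>p. - f p)"
  "holomorphic_C2 f \<Longrightarrow> holomorphic_C2 (\<lambda>p. f p ^ n)"
  unfolding holomorphic_C2_def by (simp_all add: continuous_intros holomorphic_intros)

definition hfac_x :: "complex \<times> complex \<Rightarrow> complex" where
  "hfac_x p = fst p ^ 2 * exp_quot2 (fst p * snd p)"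

definition hfac_a :: "complex \<times> complex \<Rightarrow> complex" where
  "hfac_a p = - (snd p ^ 2 + snd p * exp_quot1 (fst p * snd p)) * exp (- (fst p * snd p))"

definition hfac_c :: "complex \<times> complex \<Rightarrow> complex" where
  "hfac_c p = snd p * exp_quot1 (fst p * snd p)"

definition hfac_d :: "complex \<times> complex \<Rightarrow> complex" where
  "hfac_d p = (fst p ^ 2 - hfac_x p * (1 - fst p * snd p) - fst p) * exp (- (fst p * snd p))"

lemma holomorphic_C2_hfac:
  "holomorphic_C2 hfac_x" "holomorphic_C2 hfac_a" "holomorphic_C2 hfac_c" "holomorphic_C2 hfac_d"
proof -
  have exp: "exp holomorphic_on UNIV" "(\<lambda>t. exp (- t)) holomorphic_on UNIV"
    by (auto intro!: holomorphic_intros)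
  note intros = holomorphic_C2_intros holomorphic_C2_comp_mult holomorphic_exp_quot1
    holomorphic_exp_quot2 exp
  show x: "holomorphic_C2 hfac_x"
    unfolding hfac_x_def[abs_def] by (intro intros)
  show "holomorphic_C2 hfac_a" "holomorphic_C2 hfac_c"
    unfolding hfac_a_def[abs_def] hfac_c_def[abs_def] by (intro intros)+
  show "holomorphic_C2 hfac_d"
    unfolding hfac_d_def[abs_def] by (intro intros x)
qed

text \<open>The last four factors multiply to a matrix with the same second row as \<open>fmat\<close>
  and with entry \<open>e\<^sup>z\<^sup>w\<close> in the corner; the first factor then corrects the first row.\<close>

lemma fmat_eq_hfac_product:
  "fmat p = upper_el (hfac_x p) ** lower_el (hfac_a p) ** upper_el (fst p) ** lower_el (hfac_c p)
     ** upper_el (hfac_d p)"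
proof -
  obtain z w where p: "p = (z, w)"
    by (cases p)
  have "z * w * exp_quot1 (z * w) = exp (z * w) - 1" "z * w * exp_quot2 (z * w) = exp_quot1 (z * w) - 1"
    "exp (z * w) * exp (- (z * w)) = 1"
    by (simp_all add: mult_exp_quot1 mult_exp_quot2 exp_minus)
  then show ?thesis
    unfolding p by (simp add: mat2_simps hfac_x_def hfac_a_def hfac_c_def hfac_d_def) algebra
qed

lemma factorizable_holomorphic_5: "factorizable holomorphic_C2 5 fmat"
  unfolding factorizable_def
proof (intro exI[of _ True] exI[of _ "[hfac_x, hfac_a, fst, hfac_c, hfac_d]"] conjI allI)
  show "\<forall>h\<in>set [hfac_x, hfac_a, fst, hfac_c, hfac_d]. holomorphic_C2 h"
    using holomorphic_C2_hfac holomorphic_C2_intros(1) by simp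
  show "fmat x = elprod True (map (\<lambda>h. h x) [hfac_x, hfac_a, fst, hfac_c, hfac_d])" for x
    using fmat_eq_hfac_product[of x] by (simp add: matrix_mul_assoc)
qed simp

theorem proposition1:
  shows "factorizable (continuous_on UNIV) 4 fmat
       \<and> \<not> factorizable (continuous_on UNIV) 3 fmat
       \<and> factorizable holomorphic_C2 5 fmat
       \<and> \<not> factorizable holomorphic_C2 4 fmat
       \<and> (\<forall>h1 h2 h3 h4 :: complex \<times> complex \<Rightarrow> complex.
            continuous_on UNIV h1 \<and> continuous_on UNIV h2 \<and>
            continuous_on UNIV h3 \<and> continuous_on UNIV h4 \<and>
            (\<forall>x. fmat x = upper_el (h1 x) ** lower_el (h2 x) ** upper_el (h3 x) ** lower_el (h4 x))
            \<longrightarrow> (\<exists>x. h2 x = 0 \<and> h3 x = 0))"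
proof (intro conjI allI impI)
  fix h1 h2 h3 h4 :: "complex \<times> complex \<Rightarrow> complex"
  assume "continuous_on UNIV h1 \<and> continuous_on UNIV h2 \<and> continuous_on UNIV h3 \<and>
    continuous_on UNIV h4 \<and>
    (\<forall>x. fmat x = upper_el (h1 x) ** lower_el (h2 x) ** upper_el (h3 x) ** lower_el (h4 x))"
  then have "middle_pair h2 h3" "continuous_on UNIV h2" "continuous_on UNIV h3"
    using middle_pair_if_upper_first by blast+
  then show "\<exists>x. h2 x = 0 \<and> h3 x = 0"
    using continuous_middle_pair_zero_at_origin by blast
qed (fact factorizable_continuous_4 not_factorizable_continuous_3 factorizable_holomorphic_5
    not_factorizable_holomorphic_4)+

end
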